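(* For every integer $n\ge1$, the set $\mathcal{GL}^n$ of $n\times n$ Gram-Lorentz matrices is convex if and only if $n\le 2$.
   Context: The $m$-dimensional Lorentz cone is $\mathcal{L}_m:=\{(c,x)\in\mathbb{R}\times\mathbb{R}^{m-1}: c\ge\|x\|\}$ (Euclidean norm). An $n\times n$ real symmetric matrix $X$ is Gram-Lorentz if there exist $m\ge1$ and vectors $\ell_1,\dots,\ell_n\in\mathcal{L}_m$ with $X_{ij}=\langle\ell_i,\ell_j\rangle$ for all $i,j$; $\mathcal{GL}^n$ denotes the set of such matrices. *)

theory Defs
  imports "HOL-Analysis.Analysis"
begin

text \<open>The m-dimensional Lorentz cone. Vectors of R^m are represented as functions
  nat => real, of which only the coordinates 0..m-1 are relevant; coordinate 0 is c and
  coordinates 1..m-1 form x.\<close>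
definition lorentz_cone :: "nat \<Rightarrow> (nat \<Rightarrow> real) set" where
  "lorentz_cone m = {v. sqrt (\<Sum>k\<in>{1..<m}. (v k)^2) \<le> v 0}"

definition gram_lorentz :: "(real^'n^'n) set" where
  "gram_lorentz = {X. \<exists>m\<ge>1. \<exists>l :: 'n \<Rightarrow> nat \<Rightarrow> real.
      (\<forall>i. l i \<in> lorentz_cone m) \<and>
      (\<forall>i j. X $ i $ j = (\<Sum>k<m. l i k * l j k))}"

end

theory Submission
  imports Defs
begin

text \<open>Every Gram-Lorentz matrix is entrywise nonnegative (the Lorentz cone is self-dual) and
  positive semidefinite, so all its 2 x 2 principal submatrices are doubly nonnegative; these
  conditions are convex.  For n \<le> 2 they are also sufficient: any doubly nonnegative
  2 x 2 matrix is the Gram matrix of two vectors of the 2-dimensional Lorentz cone.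
  For n \<ge> 3 convexity fails: the 3 x 3 identity is an average of rank-one Gram-Lorentz
  matrices, but three pairwise orthogonal unit vectors of a Lorentz cone cannot exist, since
  their first coordinates would pairwise multiply to at least 1/2, forcing the squared norm
  of the sum of their spatial parts to be negative.\<close>

text \<open>For n \<le> 2 these are exactly the doubly nonnegative matrices (symmetric, entrywise
  nonnegative, positive semidefinite).\<close>
definition dnn2_matrices :: "(real^'n^'n) set" where
  "dnn2_matrices = {X. \<forall>i j. X$i$j = X$j$i \<and> 0 \<le> X$i$j \<and> (X$i$j)^2 \<le> X$i$i * X$j$j}"

lemma sum_lessThan_split_first:
  fixes f :: "nat \<Rightarrow> 'a::comm_monoid_add"
  assumes "1 \<le> m"
  shows "(\<Sum>k<m. f k) = f 0 + (\<Sum>k\<in>{1..<m}. f k)"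
proof -
  have "{..<m} = insert 0 {1..<m}" using assms by (auto simp: not_le less_one)
  then show ?thesis by simp
qed

lemma lorentz_coneD:
  assumes "v \<in> lorentz_cone m"
  shows "0 \<le> v 0" and "(\<Sum>k\<in>{1..<m}. (v k)^2) \<le> (v 0)^2"
proof -
  have le: "sqrt (\<Sum>k\<in>{1..<m}. (v k)^2) \<le> v 0" using assms by (simp add: lorentz_cone_def)
  then show "0 \<le> v 0" by (meson order_trans real_sqrt_ge_zero sum_nonneg zero_le_power2)
  show "(\<Sum>k\<in>{1..<m}. (v k)^2) \<le> (v 0)^2"
    using le by (rule sqrt_le_D)
qed

lemma lorentz_cone_inner_nonneg:
  assumes "u \<in> lorentz_cone m" "v \<in> lorentz_cone m" "1 \<le> m"
  shows "0 \<le> (\<Sum>k<m. u k * v k)"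
proof -
  let ?U = "\<Sum>k\<in>{1..<m}. (u k)^2" and ?V = "\<Sum>k\<in>{1..<m}. (v k)^2"
    and ?P = "\<Sum>k\<in>{1..<m}. u k * v k"
  have u: "0 \<le> u 0" "?U \<le> (u 0)^2" and v: "0 \<le> v 0" "?V \<le> (v 0)^2"
    using lorentz_coneD assms by blast+
  have "?P^2 \<le> ?U * ?V" by (rule Cauchy_Schwarz_ineq_sum)
  also have "\<dots> \<le> (u 0 * v 0)^2"
    using u v by (simp add: power_mult_distrib mult_mono sum_nonneg)
  finally have "\<bar>?P\<bar> \<le> u 0 * v 0"
    using u v by (metis abs_ge_zero mult_nonneg_nonneg power2_abs power2_le_imp_le)
  then show ?thesis using sum_lessThan_split_first[OF assms(3), of "\<lambda>k. u k * v k"] by linarith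
qed

lemma gram_lorentz_subset_dnn2: "gram_lorentz \<subseteq> (dnn2_matrices :: (real^'n^'n) set)"
proof
  fix X :: "real^'n^'n" assume "X \<in> gram_lorentz"
  then obtain m l where m: "m \<ge> 1" and l: "\<forall>i. l i \<in> lorentz_cone m"
    and X: "\<forall>i j. X $ i $ j = (\<Sum>k<m. l i k * l j k)" by (auto simp: gram_lorentz_def)
  show "X \<in> dnn2_matrices" unfolding dnn2_matrices_def
  proof (intro CollectI allI conjI)
    fix i j
    show "X$i$j = X$j$i" using X by (simp add: mult.commute)
    show "0 \<le> X$i$j" using X lorentz_cone_inner_nonneg[OF _ _ m] l by simp
    show "(X$i$j)^2 \<le> X$i$i * X$j$j"
      using X Cauchy_Schwarz_ineq_sum[of "l i" "l j" "{..<m}"] by (simp add: power2_eq_square)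
  qed
qed

lemma square_le_mult_convex_comb:
  fixes a1 b1 c1 a2 b2 c2 s t :: real
  assumes "c1^2 \<le> a1 * b1" "0 \<le> a1" "0 \<le> b1"
    and "c2^2 \<le> a2 * b2" "0 \<le> a2" "0 \<le> b2"
    and "0 \<le> s" "0 \<le> t"
  shows "(s*c1 + t*c2)^2 \<le> (s*a1 + t*a2) * (s*b1 + t*b2)"
proof -
  have "(2*c1*c2)^2 \<le> 4 * (a1*b2) * (a2*b1)"
  proof -
    have "(c1*c2)^2 \<le> (a1*b1) * (a2*b2)"
      using assms by (simp add: power_mult_distrib mult_mono)
    then show ?thesis by (simp add: power_mult_distrib algebra_simps)
  qed
  also have "\<dots> \<le> (a1*b2 + a2*b1)^2"
    using sum_squares_ge_zero[of "a1*b2 - a2*b1" 0] by (simp add: power2_eq_square algebra_simps)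
  finally have "\<bar>2*c1*c2\<bar> \<le> a1*b2 + a2*b1"
    using assms by (metis abs_le_square_iff add_nonneg_nonneg mult_nonneg_nonneg abs_of_nonneg)
  then have cross: "2*c1*c2 \<le> a1*b2 + a2*b1" by linarith
  have "(s*c1 + t*c2)^2 = s^2*c1^2 + s*t*(2*c1*c2) + t^2*c2^2"
    by (simp add: power2_eq_square algebra_simps)
  also have "\<dots> \<le> s^2*(a1*b1) + s*t*(a1*b2 + a2*b1) + t^2*(a2*b2)"
    using assms cross by (intro add_mono mult_left_mono) auto
  also have "\<dots> = (s*a1 + t*a2) * (s*b1 + t*b2)" by (simp add: power2_eq_square algebra_simps)
  finally show ?thesis .
qed

lemma convex_dnn2: "convex (dnn2_matrices :: (real^'n^'n) set)"
proof (rule convexI)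
  fix X Y :: "real^'n^'n" and s t :: real
  assume X: "X \<in> dnn2_matrices" and Y: "Y \<in> dnn2_matrices" and "0 \<le> s" "0 \<le> t" "s + t = 1"
  show "s *\<^sub>R X + t *\<^sub>R Y \<in> dnn2_matrices" unfolding dnn2_matrices_def
  proof (intro CollectI allI conjI)
    fix i j
    have Xij: "X$i$j = X$j$i" "0 \<le> X$i$j" "(X$i$j)^2 \<le> X$i$i * X$j$j" "0 \<le> X$i$i" "0 \<le> X$j$j"
      and Yij: "Y$i$j = Y$j$i" "0 \<le> Y$i$j" "(Y$i$j)^2 \<le> Y$i$i * Y$j$j" "0 \<le> Y$i$i" "0 \<le> Y$j$j"
      using X Y unfolding dnn2_matrices_def by blast+
    show "(s *\<^sub>R X + t *\<^sub>R Y)$i$j = (s *\<^sub>R X + t *\<^sub>R Y)$j$i" using Xij Yij by simp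
    show "0 \<le> (s *\<^sub>R X + t *\<^sub>R Y)$i$j" using Xij Yij \<open>0 \<le> s\<close> \<open>0 \<le> t\<close> by simp
    show "((s *\<^sub>R X + t *\<^sub>R Y)$i$j)^2 \<le> (s *\<^sub>R X + t *\<^sub>R Y)$i$i * (s *\<^sub>R X + t *\<^sub>R Y)$j$j"
      using square_le_mult_convex_comb[of "X$i$j" "X$i$i" "X$j$j" "Y$i$j" "Y$i$i" "Y$j$j" s t]
        Xij Yij \<open>0 \<le> s\<close> \<open>0 \<le> t\<close> by simp
  qed
qed

lemma lorentz_cone_2_gram_realization:
  fixes a b c :: real
  assumes "0 \<le> a" "0 \<le> b" "0 \<le> c" "c^2 \<le> a * b"
  obtains u v where "u \<in> lorentz_cone 2" "v \<in> lorentz_cone 2"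
    "(\<Sum>k<2. u k * u k) = a" "(\<Sum>k<2. v k * v k) = b" "(\<Sum>k<2. u k * v k) = c"
proof -
  define r where "r = sqrt (a * b)"
  define q where "q = c / r"
  have "0 \<le> r" "c \<le> r" using assms by (auto simp: r_def real_le_rsqrt)
  then have q: "0 \<le> q" "q \<le> 1" "r * q = c" using assms by (auto simp: q_def divide_simps)
  \<comment> \<open>Writing q = cos 2\<theta>: u and v are sqrt a and sqrt b times (cos \<theta>, \<plusminus>sin \<theta>), which lie
    in the cone since \<theta> \<le> pi/4, and their inner product is sqrt (a b) cos 2\<theta> = c.\<close>
  define u where "u = (\<lambda>k::nat. if k = 0 then sqrt (a*(1+q)/2) else sqrt (a*(1-q)/2))"
  define v where "v = (\<lambda>k::nat. if k = 0 then sqrt (b*(1+q)/2) else - sqrt (b*(1-q)/2))"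
  have sum2: "(\<Sum>k<2. f k) = f 0 + f 1" "(\<Sum>k\<in>{1..<2}. f k) = f 1" for f :: "nat \<Rightarrow> real"
    by (simp_all add: numeral_2_eq_2)
  have nonneg: "0 \<le> a*(1+q)/2" "0 \<le> a*(1-q)/2" "0 \<le> b*(1+q)/2" "0 \<le> b*(1-q)/2"
    using assms q by auto
  have "a*(1-q)/2 \<le> a*(1+q)/2" "b*(1-q)/2 \<le> b*(1+q)/2"
    using assms q by (auto intro!: divide_right_mono mult_left_mono)
  then have "u \<in> lorentz_cone 2" "v \<in> lorentz_cone 2"
    using nonneg by (simp_all add: lorentz_cone_def sum2 u_def v_def)
  moreover have "(\<Sum>k<2. u k * u k) = a" "(\<Sum>k<2. v k * v k) = b"
    using nonneg by (simp_all add: sum2 u_def v_def field_simps)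
  moreover have "(\<Sum>k<2. u k * v k) = c"
  proof -
    have "(\<Sum>k<2. u k * v k) = sqrt ((a*b) * ((1+q)/2)^2) - sqrt ((a*b) * ((1-q)/2)^2)"
      by (simp add: sum2 u_def v_def real_sqrt_mult[symmetric] power2_eq_square algebra_simps)
    also have "\<dots> = r * ((1+q)/2) - r * ((1-q)/2)"
      using q by (simp add: real_sqrt_mult r_def)
    also have "\<dots> = c" using q by (simp add: field_simps)
    finally show ?thesis .
  qed
  ultimately show ?thesis using that by blast
qed

lemma UNIV_eq_doubleton_if_card_le_2:
  assumes "CARD('a) \<le> 2"
  obtains a b :: "'a::finite" where "UNIV = {a, b}"
proof -
  have "0 < CARD('a)" by simp
  then have "CARD('a) = 1 \<or> CARD('a) = 2" using assms by linarith
  then show ?thesis using that by (auto simp: card_1_singleton_iff card_2_iff)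
qed

lemma dnn2_subset_gram_lorentz:
  assumes "CARD('n) \<le> 2"
  shows "(dnn2_matrices :: (real^'n^'n) set) \<subseteq> gram_lorentz"
proof
  fix X :: "real^'n^'n" assume "X \<in> dnn2_matrices"
  then have X: "X$i$j = X$j$i" "0 \<le> X$i$j" "(X$i$j)^2 \<le> X$i$i * X$j$j" for i j
    unfolding dnn2_matrices_def by auto
  obtain i0 i1 :: 'n where two: "UNIV = {i0, i1}"
    using UNIV_eq_doubleton_if_card_le_2[OF assms] .
  obtain u v where uv: "u \<in> lorentz_cone 2" "v \<in> lorentz_cone 2"
    "(\<Sum>k<2. u k * u k) = X$i0$i0" "(\<Sum>k<2. v k * v k) = X$i1$i1" "(\<Sum>k<2. u k * v k) = X$i0$i1"
    by (rule lorentz_cone_2_gram_realization[of "X$i0$i0" "X$i1$i1" "X$i0$i1"]) (use X in auto)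
  define l where "l = (\<lambda>i. if i = i0 then u else v)"
  have "X $ i $ j = (\<Sum>k<2. l i k * l j k)" for i j
    using two uv X(1)[of i0 i1] by (cases "i = i0"; cases "j = i0") (auto simp: l_def mult.commute)
  moreover have "l i \<in> lorentz_cone 2" for i using uv by (simp add: l_def)
  ultimately show "X \<in> gram_lorentz" unfolding gram_lorentz_def by (intro CollectI exI[of _ 2]) auto
qed

lemma gram_lorentz_eq_dnn2:
  assumes "CARD('n) \<le> 2"
  shows "(gram_lorentz :: (real^'n^'n) set) = dnn2_matrices"
  using gram_lorentz_subset_dnn2 dnn2_subset_gram_lorentz[OF assms] by blast

lemma lorentz_cone_no_orthonormal_triple:
  fixes a b d :: "nat \<Rightarrow> real"
  assumes m: "1 \<le> m" and cone: "a \<in> lorentz_cone m" "b \<in> lorentz_cone m" "d \<in> lorentz_cone m"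
    and unit: "(\<Sum>k<m. a k * a k) = 1" "(\<Sum>k<m. b k * b k) = 1" "(\<Sum>k<m. d k * d k) = 1"
    and orth: "(\<Sum>k<m. a k * b k) = 0" "(\<Sum>k<m. a k * d k) = 0" "(\<Sum>k<m. b k * d k) = 0"
  shows False
proof -
  let ?I = "{1..<m}"
  define A B D where "A = (\<Sum>k\<in>?I. a k * a k)" "B = (\<Sum>k\<in>?I. b k * b k)" "D = (\<Sum>k\<in>?I. d k * d k)"
  define P Q R where "P = (\<Sum>k\<in>?I. a k * b k)" "Q = (\<Sum>k\<in>?I. a k * d k)" "R = (\<Sum>k\<in>?I. b k * d k)"
  have e: "a 0 * a 0 + A = 1" "b 0 * b 0 + B = 1" "d 0 * d 0 + D = 1"
     "a 0 * b 0 + P = 0" "a 0 * d 0 + Q = 0" "b 0 * d 0 + R = 0"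
    using unit orth sum_lessThan_split_first[OF m] unfolding A_B_D_def P_Q_R_def by metis+
  have cone_ineqs: "0 \<le> a 0" "A \<le> a 0 * a 0" "0 \<le> b 0" "B \<le> b 0 * b 0" "0 \<le> d 0" "D \<le> d 0 * d 0"
    using lorentz_coneD[OF cone(1)] lorentz_coneD[OF cone(2)] lorentz_coneD[OF cone(3)]
    unfolding A_B_D_def by (auto simp: power2_eq_square)
  have half: "1/2 \<le> x * y" if "0 \<le> x" "0 \<le> y" "1/2 \<le> x*x" "1/2 \<le> y*y" for x y :: real
  proof -
    have "(1/2)^2 \<le> (x*y)^2"
      using mult_mono[OF that(3,4)] that by (simp add: power2_eq_square algebra_simps)
    then show ?thesis using that by (meson power2_le_imp_le mult_nonneg_nonneg)
  qed
  have "1/2 \<le> a 0 * a 0" "1/2 \<le> b 0 * b 0" "1/2 \<le> d 0 * d 0" using e cone_ineqs by auto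
  then have "1/2 \<le> a 0 * b 0" "1/2 \<le> a 0 * d 0" "1/2 \<le> b 0 * d 0" using half cone_ineqs by auto
  moreover have "0 \<le> (\<Sum>k\<in>?I. (a k + b k + d k)^2)" by (simp add: sum_nonneg)
  moreover have "(\<Sum>k\<in>?I. (a k + b k + d k)^2) = A + B + D + 2*P + 2*Q + 2*R"
    unfolding A_B_D_def P_Q_R_def
    by (simp add: power2_eq_square algebra_simps sum.distrib sum_distrib_left)
  ultimately show False using e cone_ineqs by linarith
qed

lemma gram_lorentz_no_identity_minor:
  assumes "X \<in> gram_lorentz" and "p \<noteq> q" "p \<noteq> r" "q \<noteq> r"
  shows "\<not> (\<forall>i\<in>{p, q, r}. \<forall>j\<in>{p, q, r}. X$i$j = (if i = j then 1 else 0))"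
proof
  assume id: "\<forall>i\<in>{p, q, r}. \<forall>j\<in>{p, q, r}. X$i$j = (if i = j then 1 else 0)"
  obtain m l where "m \<ge> 1" "\<forall>i. l i \<in> lorentz_cone m"
    and "\<forall>i j. X $ i $ j = (\<Sum>k<m. l i k * l j k)"
    using assms(1) unfolding gram_lorentz_def by blast
  with id show False
    using lorentz_cone_no_orthonormal_triple[of m "l p" "l q" "l r"] assms(2-4) by (auto simp: mult.commute)
qed

lemma rank_one_gram_lorentz:
  fixes x :: "real^'n"
  assumes "\<forall>i. 0 \<le> x$i"
  shows "(\<chi> i j. x$i * x$j) \<in> gram_lorentz"
proof -
  have "(\<lambda>k::nat. x$i) \<in> lorentz_cone 1" for i using assms by (simp add: lorentz_cone_def)
  then show ?thesis unfolding gram_lorentz_def by (auto intro!: exI[of _ 1] exI[of _ "\<lambda>i k. x$i"])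
qed

lemma card_le_2_if_convex_gram_lorentz:
  assumes convex: "convex (gram_lorentz :: (real^'n^'n) set)"
  shows "CARD('n) \<le> 2"
proof (rule ccontr)
  assume "\<not> CARD('n) \<le> 2"
  then obtain T :: "'n set" where "card T = 3"
    using obtain_subset_with_card_n[of 3 "UNIV :: 'n set"] by auto
  then obtain p q r :: 'n where pqr: "p \<noteq> q" "p \<noteq> r" "q \<noteq> r" by (auto simp: card_3_iff)
  define E :: "'n \<Rightarrow> real^'n^'n" where "E j = (\<chi> i i'. axis j (sqrt 3) $ i * axis j (sqrt 3) $ i')" for j
  have E: "E j \<in> gram_lorentz" for j unfolding E_def by (rule rank_one_gram_lorentz) (simp add: axis_def)
  define D where "D = (2/3) *\<^sub>R ((1/2) *\<^sub>R E p + (1/2) *\<^sub>R E q) + (1/3) *\<^sub>R E r"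
  have "(1/2) *\<^sub>R E p + (1/2) *\<^sub>R E q \<in> gram_lorentz"
    using convexD[OF convex E E] by simp
  then have "D \<in> gram_lorentz"
    unfolding D_def using convexD[OF convex _ E] by simp
  moreover have "D$i$j = (if i = j then 1 else 0)" if "i \<in> {p, q, r}" "j \<in> {p, q, r}" for i j
    using that pqr by (auto simp: D_def E_def axis_def)
  ultimately show False using gram_lorentz_no_identity_minor pqr by blast
qed

theorem lemma4p6:
  shows "convex (gram_lorentz :: (real^'n^'n) set) \<longleftrightarrow> CARD('n) \<le> 2"
  using card_le_2_if_convex_gram_lorentz gram_lorentz_eq_dnn2 convex_dnn2 by metis

end
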